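(* Assume the setting described in the context and suppose that for some $\gamma>1/2$, $\sum_i\lambda_i^{2\gamma-2\delta}<\infty$. Then almost surely, for every $s\in[0,1)$, the map $t\mapsto\Big(E\mapsto\int_s^tAS(t-r)E(\omega(r)-\omega(s))\,dr\Big)$ defines an element of $C_\gamma([s,1];L_2(L_2(V,V_\delta),V))$, and its $\gamma$-Hölder seminorm is bounded independently of $s\in[0,1]$.
   Context: $V$ is a separable real Hilbert space; $A$ is linear with $-A$ positive self-adjoint with compact inverse, orthonormal eigenbasis $(e_i)$, $-Ae_i=\lambda_ie_i$, $\lambda_i>0$, generating the analytic semigroup $S(t)$; $V_\delta=D((-A)^\delta)$ with $|x|_{V_\delta}=|(-A)^\delta x|$, $\delta\in[0,1]$, $\sum_i\lambda_i^{-2\delta}<\infty$; $\beta'\in(1/3,1/2)$. $L_2(X,Y)$ denotes Hilbert–Schmidt operators; $C_\gamma([s,1];X)$ is the space of $\gamma$-Hölder continuous $X$-valued functions. $Q$ is a positive symmetric trace-class operator on $V$ with $Qe_i=q_ie_i$, $q_i>0$, $\sum q_i<\infty$; $\omega$ is a $Q$-Wiener process on $[0,1]$ in $V$, in a version with $\gamma'$-Hölder paths for all $\gamma'<1/2$. *)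

theory Defs
  imports "HOL-Analysis.Analysis" "HOL-Probability.Probability"
begin

text \<open>V is a separable real Hilbert space (type 'v), e is an orthonormal
  eigenbasis of -A with eigenvalues lam i > 0.  All operators built from A are given
  through this eigenbasis (spectral calculus).\<close>

definition ONB :: "(nat \<Rightarrow> 'v::{real_inner,banach}) \<Rightarrow> bool" where
  "ONB e \<longleftrightarrow> (\<forall>i j. e i \<bullet> e j = (if i = j then 1 else 0)) \<and> closure (span (range e)) = UNIV"

definition opA :: "(nat \<Rightarrow> 'v::{real_inner,banach}) \<Rightarrow> (nat \<Rightarrow> real) \<Rightarrow> 'v \<Rightarrow> 'v" where
  "opA e lam x = (\<Sum>i. (- lam i * (x \<bullet> e i)) *\<^sub>R e i)"

definition semigr :: "(nat \<Rightarrow> 'v::{real_inner,banach}) \<Rightarrow> (nat \<Rightarrow> real) \<Rightarrow> real \<Rightarrow> 'v \<Rightarrow> 'v" where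
  "semigr e lam t x = (\<Sum>i. (exp (- lam i * t) * (x \<bullet> e i)) *\<^sub>R e i)"

definition Vdelta :: "(nat \<Rightarrow> 'v::{real_inner,banach}) \<Rightarrow> (nat \<Rightarrow> real) \<Rightarrow> real \<Rightarrow> 'v set" where
  "Vdelta e lam \<delta> = {x. summable (\<lambda>i. (lam i powr \<delta> * (x \<bullet> e i))\<^sup>2)}"

definition fracpow :: "(nat \<Rightarrow> 'v::{real_inner,banach}) \<Rightarrow> (nat \<Rightarrow> real) \<Rightarrow> real \<Rightarrow> 'v \<Rightarrow> 'v" where
  "fracpow e lam \<delta> x = (\<Sum>i. (lam i powr \<delta> * (x \<bullet> e i)) *\<^sub>R e i)"

definition norm_Vdelta :: "(nat \<Rightarrow> 'v::{real_inner,banach}) \<Rightarrow> (nat \<Rightarrow> real) \<Rightarrow> real \<Rightarrow> 'v \<Rightarrow> real" where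
  "norm_Vdelta e lam \<delta> x = norm (fracpow e lam \<delta> x)"

definition HS_V_Vdelta :: "(nat \<Rightarrow> 'v::{real_inner,banach}) \<Rightarrow> (nat \<Rightarrow> real) \<Rightarrow> real \<Rightarrow> ('v \<Rightarrow> 'v) set" where
  "HS_V_Vdelta e lam \<delta> = {E. bounded_linear E \<and> (\<forall>x. E x \<in> Vdelta e lam \<delta>) \<and>
       summable (\<lambda>j. (norm_Vdelta e lam \<delta> (E (e j)))\<^sup>2)}"

definition HSbasis :: "(nat \<Rightarrow> 'v::{real_inner,banach}) \<Rightarrow> (nat \<Rightarrow> real) \<Rightarrow> real \<Rightarrow> nat \<times> nat \<Rightarrow> 'v \<Rightarrow> 'v" where
  "HSbasis e lam \<delta> ij x = (lam (fst ij) powr (- \<delta>) * (x \<bullet> e (snd ij))) *\<^sub>R e (fst ij)"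

text \<open>Squared Hilbert-Schmidt norm in L_2(L_2(V,V_delta),V) (computed in the above ONB;
  value \<infinity> if the operator is not Hilbert-Schmidt).\<close>
definition HS_sq :: "(nat \<Rightarrow> 'v::{real_inner,banach}) \<Rightarrow> (nat \<Rightarrow> real) \<Rightarrow> real \<Rightarrow> (('v \<Rightarrow> 'v) \<Rightarrow> 'v) \<Rightarrow> ennreal" where
  "HS_sq e lam \<delta> T = (\<integral>\<^sup>+ ij. ennreal ((norm (T (HSbasis e lam \<delta> ij)))\<^sup>2) \<partial>count_space UNIV)"

text \<open>Covariance form <Qh,h> of Q = sum q_i e_i (x) e_i.\<close>
definition Qform :: "(nat \<Rightarrow> 'v::{real_inner,banach}) \<Rightarrow> (nat \<Rightarrow> real) \<Rightarrow> 'v \<Rightarrow> real" where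
  "Qform e q h = (\<Sum>i. q i * (h \<bullet> e i)\<^sup>2)"

definition Q_Wiener :: "'a measure \<Rightarrow> (nat \<Rightarrow> 'v::{real_inner,banach,second_countable_topology}) \<Rightarrow> (nat \<Rightarrow> real)
     \<Rightarrow> ('a \<Rightarrow> real \<Rightarrow> 'v) \<Rightarrow> bool" where
  "Q_Wiener M e q W \<longleftrightarrow>
     (\<forall>t\<in>{0..1}. (\<lambda>x. W x t) \<in> borel_measurable M) \<and>
     (AE x in M. W x 0 = 0) \<and>
     (\<forall>n (t::nat \<Rightarrow> real). (\<forall>k\<le>n. t k \<in> {0..1}) \<and> (\<forall>k<n. t k \<le> t (Suc k)) \<longrightarrow>
        prob_space.indep_vars M (\<lambda>_. borel) (\<lambda>k x. W x (t (Suc k)) - W x (t k)) {..<n}) \<and>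
     (\<forall>u\<in>{0..1}. \<forall>t\<in>{0..1}. \<forall>h. u < t \<and> h \<noteq> 0 \<longrightarrow>
        distributed M lborel (\<lambda>x. (W x t - W x u) \<bullet> h)
          (\<lambda>y. ennreal (normal_density 0 (sqrt ((t - u) * Qform e q h)) y)))"

definition holder_on :: "real \<Rightarrow> real set \<Rightarrow> (real \<Rightarrow> 'v::real_normed_vector) \<Rightarrow> bool" where
  "holder_on \<gamma> S f \<longleftrightarrow> (\<exists>C. \<forall>x\<in>S. \<forall>y\<in>S. norm (f x - f y) \<le> C * \<bar>x - y\<bar> powr \<gamma>)"

end

theory Submission
  imports Defs
begin

text \<open>
  The estimate is pathwise: it only uses that a path w = W x is continuous, so that its
  increments are bounded by some B.
  In the eigenbasis, the map E |-> int_s^t A S(t - r) E (w r - w s) dr sends the Hilbert-Schmidt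
  basis operator x |-> lam_i^(-delta) <x, e_j> e_i to -lam_i^(-delta) <Phi_i t, e_j> e_i, where
  Phi_i t = int_s^t lam_i exp(-lam_i (t - r)) (w r - w s) dr is \<open>exp_conv\<close>.  As the exponential
  kernel factorises, |Phi_i t - Phi_i u| <= 2 B (1 - exp(-lam_i |t - u|)) <= 2 B (lam_i |t - u|)^gamma.
  Bessel's inequality in j and summation of lam_i^(2 gamma - 2 delta) over i give the gamma-Hoelder
  bound with constant 2 B (sum_i lam_i^(2 gamma - 2 delta))^(1/2), uniformly in s.  That series can
  only converge if gamma < delta, as lam_i tends to infinity; so delta > 0 and the smoothing bound
  |A S(tau)|_(L(V_delta, V)) <= tau^(delta - 1) makes the integrands Bochner integrable.
\<close>

section \<open>Elementary real analysis\<close>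

lemma power2_powr: "(x powr a)\<^sup>2 = x powr (2 * a)" for x a :: real
  by (simp add: power2_eq_square powr_add[symmetric])

lemma powr_le_exp:
  fixes x a :: real
  assumes "0 \<le> x" "0 \<le> a" "a \<le> 1"
  shows "x powr a \<le> exp x"
proof (cases "x \<le> 1")
  case True
  then have "x powr a \<le> 1" using assms by (intro powr_le1) auto
  also have "1 \<le> exp x" using assms by simp
  finally show ?thesis .
next
  case False
  then have "x powr a \<le> x" using assms powr_mono[of a 1 x] by simp
  also have "x \<le> exp x" using exp_ge_add_one_self[of x] by linarith
  finally show ?thesis .
qed

lemma one_minus_exp_le_powr:
  fixes x g :: real
  assumes "0 \<le> x" "0 < g" "g \<le> 1"
  shows "1 - exp (- x) \<le> x powr g"
proof (cases "x \<le> 1")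
  case True
  have "1 - exp (- x) \<le> x" using exp_ge_add_one_self[of "-x"] by simp
  also have "\<dots> \<le> x powr g" using powr_mono'[of g 1 x] assms True by simp
  finally show ?thesis .
next
  case False
  then have "1 \<le> x powr g" using assms by (intro ge_one_powr_ge_zero) auto
  then show ?thesis using exp_gt_zero[of "- x"] by linarith
qed

lemma powr_weighted_one_minus_exp_sq_le:
  fixes l h \<gamma> \<delta> :: real
  assumes l: "l > 0" and h: "h \<ge> 0" and \<gamma>: "0 < \<gamma>" "\<gamma> \<le> 1"
  shows "(l powr (- \<delta>))\<^sup>2 * (1 - exp (- l * h))\<^sup>2 \<le> h powr (2 * \<gamma>) * l powr (2 * \<gamma> - 2 * \<delta>)"
proof -
  have "(1 - exp (- l * h))\<^sup>2 \<le> ((l * h) powr \<gamma>)\<^sup>2"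
    using one_minus_exp_le_powr[of "l * h" \<gamma>] l h \<gamma> by (intro power_mono) auto
  then have "(l powr (- \<delta>))\<^sup>2 * (1 - exp (- l * h))\<^sup>2 \<le> (l powr (- \<delta>))\<^sup>2 * ((l * h) powr \<gamma>)\<^sup>2"
    by (rule mult_left_mono) simp
  also have "\<dots> = h powr (2 * \<gamma>) * l powr (2 * \<gamma> - 2 * \<delta>)"
    using l h by (simp add: powr_mult power2_powr power_mult_distrib powr_add[symmetric] algebra_simps)
  finally show ?thesis .
qed

lemma summable_powr_imp_exponent_neg:
  fixes lam :: "nat \<Rightarrow> real"
  assumes "filterlim lam at_top sequentially" "summable (\<lambda>i. lam i powr p)"
  shows "p < 0"
proof (rule ccontr)
  assume "\<not> p < 0"
  have "eventually (\<lambda>i. 1 \<le> lam i) sequentially"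
    using assms(1) by (simp add: filterlim_at_top)
  then have "eventually (\<lambda>i. 1 \<le> lam i powr p) sequentially"
    by eventually_elim (use \<open>\<not> p < 0\<close> in \<open>auto intro: ge_one_powr_ge_zero\<close>)
  moreover have "(\<lambda>i. lam i powr p) \<longlonglongrightarrow> 0" using assms(2) by (rule summable_LIMSEQ_zero)
  ultimately have "1 \<le> (0::real)"
    by (intro tendsto_lowerbound[OF _ _ trivial_limit_sequentially]) auto
  then show False by simp
qed

lemma nn_integral_count_space_nat_le:
  fixes a :: "nat \<Rightarrow> real"
  assumes "\<And>j. 0 \<le> a j" "\<And>N. (\<Sum>j<N. a j) \<le> c"
  shows "(\<integral>\<^sup>+ j. ennreal (a j) \<partial>count_space UNIV) \<le> ennreal c"
proof -
  have s: "summable a" by (rule summableI_nonneg_bounded[OF assms])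
  have "(\<integral>\<^sup>+ j. ennreal (a j) \<partial>count_space UNIV) = (\<Sum>j. ennreal (a j))"
    by (rule nn_integral_count_space_nat)
  also have "\<dots> = ennreal (\<Sum>j. a j)"
    using s assms(1) by (intro suminf_ennreal_eq) auto
  also have "\<dots> \<le> ennreal c" using suminf_le_const[OF s assms(2)] by (rule ennreal_leI)
  finally show ?thesis .
qed

lemma set_integrable_powr_kernel:
  fixes s t a :: real
  assumes "s \<le> t" "a > -1"
  shows "set_integrable lborel {s..t} (\<lambda>r. (t - r) powr a)"
proof -
  have "(\<lambda>x. x powr a) integrable_on {0..t - s}"
    by (rule integrable_on_powr_from_0) (use assms in auto)
  then have "(\<lambda>r. (t - r) powr a) integrable_on {s..t}"
    using integrable_affinity[of "\<lambda>x. x powr a" 0 "t - s" "-1" t] assms by simp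
  then have "(\<lambda>r. (t - r) powr a) absolutely_integrable_on {s..t}"
    by (subst absolutely_integrable_on_iff_nonneg) auto
  then show ?thesis unfolding set_integrable_def by (simp add: integrable_completion)
qed

lemma holder_on_imp_continuous_on:
  fixes f :: "real \<Rightarrow> 'v::real_normed_vector"
  assumes "holder_on g S f" "g > 0"
  shows "continuous_on S f"
proof -
  obtain C where C: "\<forall>x\<in>S. \<forall>y\<in>S. norm (f x - f y) \<le> C * \<bar>x - y\<bar> powr g"
    using assms(1) unfolding holder_on_def by blast
  show ?thesis unfolding continuous_on_def
  proof
    fix a assume a: "a \<in> S"
    have "((\<lambda>r. C * \<bar>r - a\<bar> powr g) \<longlongrightarrow> 0) (at a within S)"
      by (intro tendsto_mult_right_zero tendsto_zero_powrI) (auto intro!: tendsto_eq_intros assms(2))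
    moreover have "\<forall>\<^sub>F r in at a within S. norm (f r - f a) \<le> C * \<bar>r - a\<bar> powr g"
      using C a by (auto simp: eventually_at_filter intro: always_eventually)
    ultimately have "((\<lambda>r. f r - f a) \<longlongrightarrow> 0) (at a within S)"
      by (rule Lim_null_comparison[rotated])
    then show "(f \<longlongrightarrow> f a) (at a within S)" by (simp add: LIM_zero_iff)
  qed
qed

section \<open>Orthonormal sequences\<close>

definition orthonormal_seq :: "(nat \<Rightarrow> 'v::real_inner) \<Rightarrow> bool" where
  "orthonormal_seq e \<longleftrightarrow> (\<forall>i j. e i \<bullet> e j = (if i = j then 1 else 0))"

lemma ONB_imp_orthonormal_seq: "ONB e \<Longrightarrow> orthonormal_seq e"
  by (simp add: ONB_def orthonormal_seq_def)

lemma norm_orthonormal_seq: "orthonormal_seq e \<Longrightarrow> norm (e i) = 1"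
  by (simp add: orthonormal_seq_def norm_eq_sqrt_inner)

lemma inner_sum_orthonormal_seq:
  assumes "orthonormal_seq e" "finite I"
  shows "(\<Sum>i\<in>I. c i *\<^sub>R e i) \<bullet> e k = (if k \<in> I then c k else 0)"
proof -
  have "(\<Sum>i\<in>I. c i *\<^sub>R e i) \<bullet> e k = (\<Sum>i\<in>I. if i = k then c i else 0)"
    using assms(1) by (auto simp: inner_sum_left orthonormal_seq_def intro!: sum.cong)
  then show ?thesis using assms(2) by simp
qed

lemma norm_sum_orthonormal_seq_sq:
  assumes "orthonormal_seq e" "finite I"
  shows "(norm (\<Sum>i\<in>I. c i *\<^sub>R e i))\<^sup>2 = (\<Sum>i\<in>I. (c i)\<^sup>2)"
proof -
  have "(norm (\<Sum>i\<in>I. c i *\<^sub>R e i))\<^sup>2 = (\<Sum>i\<in>I. c i * ((\<Sum>j\<in>I. c j *\<^sub>R e j) \<bullet> e i))"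
    by (simp add: power2_norm_eq_inner inner_sum_right)
  then show ?thesis
    using inner_sum_orthonormal_seq[OF assms] by (simp add: power2_eq_square)
qed

lemma bessel_inequality_finite:
  assumes "orthonormal_seq e" "finite I"
  shows "(\<Sum>i\<in>I. (x \<bullet> e i)\<^sup>2) \<le> (norm x)\<^sup>2"
proof -
  define p where "p = (\<Sum>i\<in>I. (x \<bullet> e i) *\<^sub>R e i)"
  have "0 \<le> (norm (x - p))\<^sup>2" by simp
  also have "\<dots> = (norm x)\<^sup>2 - 2 * (x \<bullet> p) + (norm p)\<^sup>2"
    by (simp add: power2_norm_eq_inner inner_diff_left inner_diff_right inner_commute)
  also have "x \<bullet> p = (\<Sum>i\<in>I. (x \<bullet> e i)\<^sup>2)"
    unfolding p_def by (simp add: inner_sum_right power2_eq_square)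
  also have "(norm p)\<^sup>2 = (\<Sum>i\<in>I. (x \<bullet> e i)\<^sup>2)"
    unfolding p_def by (rule norm_sum_orthonormal_seq_sq[OF assms])
  finally show ?thesis by simp
qed

lemma summable_inner_orthonormal_seq_sq:
  "orthonormal_seq e \<Longrightarrow> summable (\<lambda>i. (x \<bullet> e i)\<^sup>2)"
  by (rule summableI_nonneg_bounded[where x="(norm x)\<^sup>2"]) (auto intro: bessel_inequality_finite)

lemma summable_orthonormal_series:
  fixes e :: "nat \<Rightarrow> 'v::{real_inner,banach}"
  assumes "orthonormal_seq e" "summable (\<lambda>i. (c i)\<^sup>2)"
  shows "summable (\<lambda>i. c i *\<^sub>R e i)"
  unfolding summable_Cauchy
proof (intro allI impI)
  fix \<epsilon> :: real assume "\<epsilon> > 0"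
  then obtain N where N: "\<forall>m\<ge>N. \<forall>n. norm (\<Sum>i\<in>{m..<n}. (c i)\<^sup>2) < \<epsilon>\<^sup>2"
    using assms(2) unfolding summable_Cauchy by (meson zero_less_power)
  have "norm (\<Sum>i\<in>{m..<n}. c i *\<^sub>R e i) < \<epsilon>" if "N \<le> m" for m n
  proof -
    have "(norm (\<Sum>i\<in>{m..<n}. c i *\<^sub>R e i))\<^sup>2 < \<epsilon>\<^sup>2"
      using N that norm_sum_orthonormal_seq_sq[OF assms(1), of "{m..<n}" c]
      by (simp add: sum_nonneg)
    then show ?thesis using \<open>\<epsilon> > 0\<close> by (simp add: power_less_imp_less_base)
  qed
  then show "\<exists>N. \<forall>m\<ge>N. \<forall>n. norm (\<Sum>i\<in>{m..<n}. c i *\<^sub>R e i) < \<epsilon>" by blast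
qed

lemma
  fixes e :: "nat \<Rightarrow> 'v::{real_inner,banach}"
  assumes "orthonormal_seq e" "summable (\<lambda>i. (c i)\<^sup>2)"
  shows inner_suminf_orthonormal_seq: "(\<Sum>i. c i *\<^sub>R e i) \<bullet> e k = c k"
    and norm_suminf_orthonormal_seq_sq: "(norm (\<Sum>i. c i *\<^sub>R e i))\<^sup>2 = (\<Sum>i. (c i)\<^sup>2)"
proof -
  have lim: "(\<lambda>n. \<Sum>i<n. c i *\<^sub>R e i) \<longlonglongrightarrow> (\<Sum>i. c i *\<^sub>R e i)"
    using summable_orthonormal_series[OF assms] by (simp add: summable_LIMSEQ)
  have "(\<lambda>n. \<Sum>i<n. if i = k then c i else 0) \<longlonglongrightarrow> (\<Sum>i. c i *\<^sub>R e i) \<bullet> e k"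
    using tendsto_inner[OF lim tendsto_const, of "e k"]
    by (simp add: inner_sum_orthonormal_seq[OF assms(1)] if_distrib cong: if_cong)
  moreover have "(\<lambda>n. \<Sum>i<n. if i = k then c i else 0) \<longlonglongrightarrow> c k"
    using sums_single[of k c] unfolding sums_def .
  ultimately show "(\<Sum>i. c i *\<^sub>R e i) \<bullet> e k = c k" using LIMSEQ_unique by blast
  have "(\<lambda>n. \<Sum>i<n. (c i)\<^sup>2) \<longlonglongrightarrow> (norm (\<Sum>i. c i *\<^sub>R e i))\<^sup>2"
    using tendsto_power[OF tendsto_norm[OF lim], of 2]
    by (simp add: norm_sum_orthonormal_seq_sq[OF assms(1)])
  then show "(norm (\<Sum>i. c i *\<^sub>R e i))\<^sup>2 = (\<Sum>i. (c i)\<^sup>2)"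
    using LIMSEQ_unique summable_LIMSEQ[OF assms(2)] by blast
qed

lemma suminf_orthonormal_seq_single:
  assumes "orthonormal_seq e"
  shows "(\<Sum>k. (f k * (x *\<^sub>R e i \<bullet> e k)) *\<^sub>R e k) = (f i * x) *\<^sub>R e i"
proof -
  have "(\<lambda>k. (f k * (x *\<^sub>R e i \<bullet> e k)) *\<^sub>R e k) = (\<lambda>k. if k = i then (f i * x) *\<^sub>R e i else 0)"
    using assms by (auto simp: orthonormal_seq_def)
  then show ?thesis using sums_single[of i "\<lambda>_. (f i * x) *\<^sub>R e i"] sums_unique by metis
qed

lemma ONB_expansion:
  assumes "ONB e"
  shows "(\<lambda>j. (x \<bullet> e j) *\<^sub>R e j) sums x"
proof -
  have o: "orthonormal_seq e" using assms by (rule ONB_imp_orthonormal_seq)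
  have sq: "summable (\<lambda>j. (x \<bullet> e j)\<^sup>2)" using o by (rule summable_inner_orthonormal_seq_sq)
  define d where "d = x - (\<Sum>j. (x \<bullet> e j) *\<^sub>R e j)"
  have "d \<bullet> e k = 0" for k
    unfolding d_def by (simp add: inner_diff_left inner_suminf_orthonormal_seq[OF o sq])
  then have "span (range e) \<subseteq> {v. d \<bullet> v = 0}"
    by (intro span_minimal) (auto simp: subspace_def inner_add_right)
  then have "closure (span (range e)) \<subseteq> {v. d \<bullet> v = 0}"
    by (rule closure_minimal) (intro closed_Collect_eq continuous_intros)
  then have "d \<bullet> d = 0" using assms unfolding ONB_def by blast
  then have "x = (\<Sum>j. (x \<bullet> e j) *\<^sub>R e j)" by (simp add: d_def)
  then show ?thesis using summable_sums[OF summable_orthonormal_series[OF o sq]] by metis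
qed

lemma norm_le_Hilbert_Schmidt:
  fixes T :: "'v::{real_inner,banach} \<Rightarrow> 'w::real_normed_vector"
  assumes e: "ONB e" and T: "bounded_linear T"
    and b: "\<And>j. norm (T (e j)) \<le> b j" and sb: "summable (\<lambda>j. (b j)\<^sup>2)"
  shows "(norm (T w))\<^sup>2 \<le> (\<Sum>j. (b j)\<^sup>2) * (norm w)\<^sup>2"
proof -
  define H where "H = (\<Sum>j. (b j)\<^sup>2)"
  have H0: "0 \<le> H" unfolding H_def using sb by (simp add: suminf_nonneg)
  have sums: "(\<lambda>j. (w \<bullet> e j) *\<^sub>R T (e j)) sums T w"
    using bounded_linear.sums[OF T ONB_expansion[OF e, of w]]
    by (simp add: linear_simps(5)[OF T])
  have "norm (\<Sum>j<M. (w \<bullet> e j) *\<^sub>R T (e j)) \<le> norm w * sqrt H" for M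
  proof -
    have "norm (\<Sum>j<M. (w \<bullet> e j) *\<^sub>R T (e j)) \<le> (\<Sum>j<M. \<bar>w \<bullet> e j\<bar> * b j)"
      by (rule order_trans[OF norm_sum sum_mono]) (simp add: b mult_left_mono)
    also have "\<dots> \<le> sqrt (\<Sum>j<M. (w \<bullet> e j)\<^sup>2) * sqrt (\<Sum>j<M. (b j)\<^sup>2)"
      using Cauchy_Schwarz_ineq_sum[of "\<lambda>j. \<bar>w \<bullet> e j\<bar>" b "{..<M}"]
      unfolding real_sqrt_mult[symmetric] by (intro real_le_rsqrt) simp
    also have "\<dots> \<le> norm w * sqrt H"
    proof (rule mult_mono)
      show "sqrt (\<Sum>j<M. (w \<bullet> e j)\<^sup>2) \<le> norm w"
        using bessel_inequality_finite[OF ONB_imp_orthonormal_seq[OF e], of "{..<M}" w]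
        by (intro real_le_lsqrt) auto
      show "sqrt (\<Sum>j<M. (b j)\<^sup>2) \<le> sqrt H"
        unfolding H_def real_sqrt_le_iff using sb by (rule sum_le_suminf) auto
    qed (auto intro: sum_nonneg)
    finally show ?thesis .
  qed
  then have "norm (T w) \<le> norm w * sqrt H"
    using sums unfolding sums_def by (intro LIMSEQ_le_const2[OF tendsto_norm]) auto
  then have "(norm (T w))\<^sup>2 \<le> (norm w * sqrt H)\<^sup>2" by (rule power_mono) simp
  also have "\<dots> = H * (norm w)\<^sup>2" using H0 by (simp add: power_mult_distrib)
  finally show ?thesis unfolding H_def .
qed

section \<open>Hilbert-Schmidt operators into V_delta\<close>

lemma norm_Vdelta_sq:
  assumes "orthonormal_seq e" "x \<in> Vdelta e lam \<delta>"
  shows "(norm_Vdelta e lam \<delta> x)\<^sup>2 = (\<Sum>i. (lam i powr \<delta> * (x \<bullet> e i))\<^sup>2)"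
  using assms norm_suminf_orthonormal_seq_sq[OF assms(1), of "\<lambda>i. lam i powr \<delta> * (x \<bullet> e i)"]
  by (simp add: norm_Vdelta_def fracpow_def Vdelta_def)

lemma norm_Vdelta_HS_le:
  assumes e: "ONB e" and E: "E \<in> HS_V_Vdelta e lam \<delta>"
  shows "(norm_Vdelta e lam \<delta> (E w))\<^sup>2 \<le> (\<Sum>j. (norm_Vdelta e lam \<delta> (E (e j)))\<^sup>2) * (norm w)\<^sup>2"
proof -
  have o: "orthonormal_seq e" using e by (rule ONB_imp_orthonormal_seq)
  have inV: "\<And>x. E x \<in> Vdelta e lam \<delta>"
    and hs: "summable (\<lambda>j. (norm_Vdelta e lam \<delta> (E (e j)))\<^sup>2)"
    using E by (auto simp: HS_V_Vdelta_def)
  have partial: "(\<Sum>i<N. (lam i powr \<delta> * (y \<bullet> e i))\<^sup>2) \<le> (norm_Vdelta e lam \<delta> y)\<^sup>2"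
    if "y \<in> Vdelta e lam \<delta>" for y N
    unfolding norm_Vdelta_sq[OF o that] using that by (intro sum_le_suminf) (auto simp: Vdelta_def)
  have "(\<Sum>i<N. (lam i powr \<delta> * (E w \<bullet> e i))\<^sup>2)
      \<le> (\<Sum>j. (norm_Vdelta e lam \<delta> (E (e j)))\<^sup>2) * (norm w)\<^sup>2" for N
  proof -
    define P where "P y = (\<Sum>i<N. (lam i powr \<delta> * (y \<bullet> e i)) *\<^sub>R e i)" for y
    have nP: "(norm (P y))\<^sup>2 = (\<Sum>i<N. (lam i powr \<delta> * (y \<bullet> e i))\<^sup>2)" for y
      unfolding P_def by (rule norm_sum_orthonormal_seq_sq[OF o]) simp
    have "bounded_linear P" unfolding P_def
      by (intro bounded_linear_sum bounded_linear_compose[OF bounded_linear_scaleR_left]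
            bounded_linear_const_mult bounded_linear_inner_left)
    moreover have "bounded_linear E" using E by (simp add: HS_V_Vdelta_def)
    ultimately have "bounded_linear (\<lambda>v. P (E v))" by (rule bounded_linear_compose)
    moreover have "norm (P (E (e j))) \<le> norm_Vdelta e lam \<delta> (E (e j))" for j
    proof (rule power2_le_imp_le)
      show "(norm (P (E (e j))))\<^sup>2 \<le> (norm_Vdelta e lam \<delta> (E (e j)))\<^sup>2"
        unfolding nP by (rule partial[OF inV])
    qed (simp add: norm_Vdelta_def)
    ultimately have "(norm (P (E w)))\<^sup>2 \<le> (\<Sum>j. (norm_Vdelta e lam \<delta> (E (e j)))\<^sup>2) * (norm w)\<^sup>2"
      by (rule norm_le_Hilbert_Schmidt[OF e _ _ hs])
    then show ?thesis by (simp only: nP)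
  qed
  then have "(\<Sum>i. (lam i powr \<delta> * (E w \<bullet> e i))\<^sup>2)
      \<le> (\<Sum>j. (norm_Vdelta e lam \<delta> (E (e j)))\<^sup>2) * (norm w)\<^sup>2"
    using inV[of w] by (intro suminf_le_const) (auto simp: Vdelta_def)
  then show ?thesis by (simp add: norm_Vdelta_sq[OF o inV])
qed

lemma HS_sq_diff_commute: "HS_sq e lam \<delta> (\<lambda>E. f E - g E) = HS_sq e lam \<delta> (\<lambda>E. g E - f E)"
  by (simp add: HS_sq_def norm_minus_commute)

section \<open>The semigroup in the eigenbasis\<close>

lemma semigr_inner:
  assumes o: "orthonormal_seq e" and lam: "\<forall>i. lam i > 0" and \<tau>: "\<tau> \<ge> 0"
  shows "semigr e lam \<tau> y \<bullet> e k = exp (- lam k * \<tau>) * (y \<bullet> e k)"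
proof -
  have le: "(exp (- lam i * \<tau>) * (y \<bullet> e i))\<^sup>2 \<le> (y \<bullet> e i)\<^sup>2" for i
  proof -
    have "exp (- lam i * \<tau>) \<le> 1" using lam \<tau> by (simp add: less_imp_le)
    then show ?thesis by (simp add: power_mult_distrib mult_left_le_one_le power_le_one)
  qed
  have "summable (\<lambda>i. (exp (- lam i * \<tau>) * (y \<bullet> e i))\<^sup>2)"
    by (rule summable_comparison_test'[OF summable_inner_orthonormal_seq_sq[OF o, of y]]) (use le in simp)
  then show ?thesis unfolding semigr_def by (rule inner_suminf_orthonormal_seq[OF o])
qed

lemma opA_semigr:
  assumes "orthonormal_seq e" "\<forall>i. lam i > 0" "\<tau> \<ge> 0"
  shows "opA e lam (semigr e lam \<tau> y) = (\<Sum>i. (- lam i * (exp (- lam i * \<tau>) * (y \<bullet> e i))) *\<^sub>R e i)"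
  unfolding opA_def semigr_inner[OF assms] ..

lemma opA_semigr_HSbasis:
  assumes o: "orthonormal_seq e"
  shows "opA e lam (semigr e lam \<tau> (HSbasis e lam \<delta> (i, j) v))
     = (- lam i * (exp (- lam i * \<tau>) * (lam i powr (- \<delta>) * (v \<bullet> e j)))) *\<^sub>R e i"
proof -
  define c where "c = lam i powr (- \<delta>) * (v \<bullet> e j)"
  have "semigr e lam \<tau> (HSbasis e lam \<delta> (i, j) v) = (exp (- lam i * \<tau>) * c) *\<^sub>R e i"
    unfolding semigr_def HSbasis_def
    using suminf_orthonormal_seq_single[OF o, of "\<lambda>k. exp (- lam k * \<tau>)" c i]
    by (simp add: c_def mult.assoc)
  moreover have "opA e lam ((exp (- lam i * \<tau>) * c) *\<^sub>R e i) = (- lam i * (exp (- lam i * \<tau>) * c)) *\<^sub>R e i"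
    unfolding opA_def using suminf_orthonormal_seq_single[OF o, of "\<lambda>k. - lam k"] by simp
  ultimately show ?thesis by (simp add: c_def)
qed

text \<open>The smoothing estimate |A S(tau)|_(L(V_delta, V)) <= tau^(delta - 1), one eigenvalue at a time.\<close>
lemma exp_kernel_le_powr:
  fixes l \<tau> \<delta> :: real
  assumes l: "l > 0" and \<tau>: "\<tau> > 0" and \<delta>: "0 \<le> \<delta>" "\<delta> \<le> 1"
  shows "l * exp (- l * \<tau>) \<le> \<tau> powr (\<delta> - 1) * l powr \<delta>"
proof -
  have "l = \<tau> powr (\<delta> - 1) * l powr \<delta> * (l * \<tau>) powr (1 - \<delta>)"
    using l \<tau> by (simp add: powr_mult powr_diff powr_minus field_simps)
  then have eq: "l * exp (- l * \<tau>) = \<tau> powr (\<delta> - 1) * l powr \<delta> * ((l * \<tau>) powr (1 - \<delta>) * exp (- (l * \<tau>)))"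
    by (metis mult.assoc mult_minus_left)
  have "(l * \<tau>) powr (1 - \<delta>) * exp (- (l * \<tau>)) \<le> 1"
    using powr_le_exp[of "l * \<tau>" "1 - \<delta>"] l \<tau> \<delta> by (simp add: exp_minus field_simps)
  then show ?thesis unfolding eq by (rule mult_left_le) simp
qed

lemma opA_semigr_coeff_sq_le:
  fixes l \<tau> \<delta> c :: real
  assumes "l > 0" "\<tau> > 0" "0 \<le> \<delta>" "\<delta> \<le> 1"
  shows "(- l * (exp (- l * \<tau>) * c))\<^sup>2 \<le> \<tau> powr (2 * \<delta> - 2) * (l powr \<delta> * c)\<^sup>2"
proof -
  have "(- l * (exp (- l * \<tau>) * c))\<^sup>2 = (l * exp (- l * \<tau>))\<^sup>2 * c\<^sup>2"
    by (simp add: power_mult_distrib)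
  also have "\<dots> \<le> (\<tau> powr (\<delta> - 1) * l powr \<delta>)\<^sup>2 * c\<^sup>2"
    using exp_kernel_le_powr[OF assms] assms(1) by (intro mult_right_mono power_mono) auto
  also have "\<dots> = \<tau> powr (2 * \<delta> - 2) * (l powr \<delta> * c)\<^sup>2"
    by (simp add: power_mult_distrib power2_powr algebra_simps)
  finally show ?thesis .
qed

lemma
  assumes o: "orthonormal_seq e" and lam: "\<forall>i. lam i > 0" and \<tau>: "\<tau> > 0"
    and \<delta>: "0 \<le> \<delta>" "\<delta> \<le> 1" and y: "y \<in> Vdelta e lam \<delta>"
  shows summable_opA_semigr_coeff: "summable (\<lambda>i. (- lam i * (exp (- lam i * \<tau>) * (y \<bullet> e i)))\<^sup>2)"
    and norm_opA_semigr_le: "norm (opA e lam (semigr e lam \<tau> y)) \<le> \<tau> powr (\<delta> - 1) * norm_Vdelta e lam \<delta> y"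
proof -
  define c where "c i = - lam i * (exp (- lam i * \<tau>) * (y \<bullet> e i))" for i
  have sy: "summable (\<lambda>i. (lam i powr \<delta> * (y \<bullet> e i))\<^sup>2)" using y by (simp add: Vdelta_def)
  have c: "(c i)\<^sup>2 \<le> \<tau> powr (2 * \<delta> - 2) * (lam i powr \<delta> * (y \<bullet> e i))\<^sup>2" for i
    unfolding c_def using lam \<tau> \<delta> by (intro opA_semigr_coeff_sq_le) auto
  show sc: "summable (\<lambda>i. (- lam i * (exp (- lam i * \<tau>) * (y \<bullet> e i)))\<^sup>2)"
    by (rule summable_comparison_test'[OF summable_mult[OF sy]]) (use c in \<open>simp add: c_def\<close>)
  then have sc': "summable (\<lambda>i. (c i)\<^sup>2)" by (simp add: c_def)
  have "(norm (opA e lam (semigr e lam \<tau> y)))\<^sup>2 = (\<Sum>i. (c i)\<^sup>2)"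
    unfolding opA_semigr[OF o lam less_imp_le[OF \<tau>]] c_def
    by (rule norm_suminf_orthonormal_seq_sq[OF o sc])
  also have "\<dots> \<le> (\<Sum>i. \<tau> powr (2 * \<delta> - 2) * (lam i powr \<delta> * (y \<bullet> e i))\<^sup>2)"
    by (rule suminf_le[OF c sc' summable_mult[OF sy]])
  also have "\<dots> = \<tau> powr (2 * \<delta> - 2) * (\<Sum>i. (lam i powr \<delta> * (y \<bullet> e i))\<^sup>2)"
    by (rule suminf_mult[OF sy])
  also have "\<dots> = (\<tau> powr (\<delta> - 1) * norm_Vdelta e lam \<delta> y)\<^sup>2"
    by (simp add: norm_Vdelta_sq[OF o y] power_mult_distrib power2_powr algebra_simps)
  finally show "norm (opA e lam (semigr e lam \<tau> y)) \<le> \<tau> powr (\<delta> - 1) * norm_Vdelta e lam \<delta> y"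
    by (rule power2_le_imp_le) (simp add: norm_Vdelta_def)
qed

lemma opA_semigr_measurable:
  fixes e :: "nat \<Rightarrow> 'v::{real_inner,banach,second_countable_topology}"
  assumes o: "orthonormal_seq e" and lam: "\<forall>i. lam i > 0" and \<delta>: "0 \<le> \<delta>" "\<delta> \<le> 1"
    and y: "continuous_on {s..t} y" and yV: "\<And>r. y r \<in> Vdelta e lam \<delta>" and st: "s \<le> t"
  shows "(\<lambda>r. indicator {s..t} r *\<^sub>R opA e lam (semigr e lam (t - r) (y r))) \<in> borel_measurable borel"
proof -
  define c where "c i r = - lam i * (exp (- lam i * (t - r)) * (y r \<bullet> e i))" for i r
  define P where "P N r = (\<Sum>i<N. c i r *\<^sub>R e i)" for N r
  have "(\<lambda>r. indicator {s..<t} r *\<^sub>R P N r) \<in> borel_measurable borel" for N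
  proof (rule borel_measurable_continuous_on_indicator)
    have "continuous_on {s..t} (P N)" unfolding P_def c_def by (intro continuous_intros y)
    then show "continuous_on {s..<t} (P N)" by (rule continuous_on_subset) auto
  qed auto
  moreover have "(\<lambda>N. indicator {s..<t} r *\<^sub>R P N r)
      \<longlonglongrightarrow> indicator {s..<t} r *\<^sub>R opA e lam (semigr e lam (t - r) (y r))" for r
  proof (cases "r \<in> {s..<t}")
    case True
    then have \<tau>: "t - r > 0" by auto
    have "summable (\<lambda>i. (c i r)\<^sup>2)"
      unfolding c_def by (rule summable_opA_semigr_coeff[OF o lam \<tau> \<delta> yV])
    then have "(\<lambda>N. P N r) \<longlonglongrightarrow> (\<Sum>i. c i r *\<^sub>R e i)"
      unfolding P_def by (intro summable_LIMSEQ summable_orthonormal_series[OF o])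
    also have "(\<Sum>i. c i r *\<^sub>R e i) = opA e lam (semigr e lam (t - r) (y r))"
      unfolding c_def using \<tau> by (intro opA_semigr[OF o lam, symmetric]) auto
    finally show ?thesis using True by simp
  qed simp
  ultimately have "(\<lambda>r. indicator {s..<t} r *\<^sub>R opA e lam (semigr e lam (t - r) (y r)))
      \<in> borel_measurable borel"
    by (rule borel_measurable_LIMSEQ_metric)
  then have "(\<lambda>r. indicator {s..<t} r *\<^sub>R opA e lam (semigr e lam (t - r) (y r))
      + indicator {t} r *\<^sub>R opA e lam (semigr e lam 0 (y t))) \<in> borel_measurable borel"
    by (rule borel_measurable_add) simp
  also have "(\<lambda>r. indicator {s..<t} r *\<^sub>R opA e lam (semigr e lam (t - r) (y r))
      + indicator {t} r *\<^sub>R opA e lam (semigr e lam 0 (y t)))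
    = (\<lambda>r. indicator {s..t} r *\<^sub>R opA e lam (semigr e lam (t - r) (y r)))"
    using st by (auto simp: indicator_def fun_eq_iff)
  finally show ?thesis .
qed

lemma set_integrable_opA_semigr:
  fixes G :: "real \<Rightarrow> 'v::{real_inner,banach,second_countable_topology}"
  assumes e: "ONB e" and lam: "\<forall>i. lam i > 0" and \<delta>: "0 < \<delta>" "\<delta> \<le> 1"
    and E: "E \<in> HS_V_Vdelta e lam \<delta>" and G: "continuous_on {s..t} G"
    and B: "\<And>r. r \<in> {s..t} \<Longrightarrow> norm (G r) \<le> B" and st: "s \<le> t"
  shows "set_integrable lborel {s..t} (\<lambda>r. opA e lam (semigr e lam (t - r) (E (G r))))"
proof -
  have o: "orthonormal_seq e" using e by (rule ONB_imp_orthonormal_seq)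
  have bl: "bounded_linear E" and yV: "\<And>w. E w \<in> Vdelta e lam \<delta>"
    using E by (auto simp: HS_V_Vdelta_def)
  define f where "f r = opA e lam (semigr e lam (t - r) (E (G r)))" for r
  define H where "H = (\<Sum>j. (norm_Vdelta e lam \<delta> (E (e j)))\<^sup>2)"
  define M where "M = sqrt H * B"
  have B0: "0 \<le> B" using B[of s] st by (auto intro: order_trans[OF norm_ge_zero])
  have H0: "0 \<le> H" unfolding H_def using E by (auto simp: HS_V_Vdelta_def intro: suminf_nonneg)
  have M0: "0 \<le> M" unfolding M_def using B0 H0 by simp
  have bound: "norm (f r) \<le> (t - r) powr (\<delta> - 1) * M" if "r \<in> {s..<t}" for r
  proof -
    have "(norm_Vdelta e lam \<delta> (E (G r)))\<^sup>2 \<le> H * (norm (G r))\<^sup>2"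
      unfolding H_def by (rule norm_Vdelta_HS_le[OF e E])
    also have "\<dots> \<le> M\<^sup>2"
      using H0 B[of r] that unfolding M_def power_mult_distrib real_sqrt_pow2[OF H0]
      by (intro mult_left_mono power_mono) auto
    finally have "norm_Vdelta e lam \<delta> (E (G r)) \<le> M" using M0 by (rule power2_le_imp_le)
    then show ?thesis
      unfolding f_def using that \<delta>
      by (intro order_trans[OF norm_opA_semigr_le[OF o lam _ _ _ yV]] mult_left_mono) auto
  qed
  have meas: "(\<lambda>r. indicator {s..t} r *\<^sub>R f r) \<in> borel_measurable borel"
    unfolding f_def using \<delta> continuous_on_compose[OF G linear_continuous_on[OF bl]]
    by (intro opA_semigr_measurable[OF o lam _ _ _ yV st]) (auto simp: o_def)
  have kernel: "integrable lborel (\<lambda>r. indicator {s..t} r *\<^sub>R ((t - r) powr (\<delta> - 1) * M))"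
    using set_integrable_mult_left[OF set_integrable_powr_kernel[OF st, of "\<delta> - 1"], of M] \<delta>
    by (simp add: set_integrable_def)
  have "integrable lborel (\<lambda>r. indicator {s..t} r *\<^sub>R f r)"
  proof (rule Bochner_Integration.integrable_bound[OF kernel meas[folded measurable_lborel2]])
    show "AE r in lborel. norm (indicator {s..t} r *\<^sub>R f r)
        \<le> norm (indicator {s..t} r *\<^sub>R ((t - r) powr (\<delta> - 1) * M))"
      using AE_lborel_singleton[of t]
      by eventually_elim (use bound M0 in \<open>auto simp: indicator_def\<close>)
  qed
  then show ?thesis unfolding set_integrable_def f_def .
qed

section \<open>Convolution with the exponential kernel\<close>

definition exp_conv :: "real \<Rightarrow> real \<Rightarrow> real \<Rightarrow> (real \<Rightarrow> 'a::real_normed_vector) \<Rightarrow> 'a" where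
  "exp_conv l s t f = integral {s..t} (\<lambda>r. (l * exp (- l * (t - r))) *\<^sub>R f r)"

lemma exp_kernel_has_integral:
  fixes l a b :: real
  assumes "a \<le> b"
  shows "((\<lambda>r. l * exp (- l * (b - r))) has_integral (1 - exp (- l * (b - a)))) {a..b}"
proof -
  have "((\<lambda>r. l * exp (- l * (b - r))) has_integral (exp (- l * (b - b)) - exp (- l * (b - a)))) {a..b}"
    using assms
    by (intro fundamental_theorem_of_calculus)
       (auto intro!: derivative_eq_intros simp flip: has_real_derivative_iff_has_vector_derivative)
  then show ?thesis by simp
qed

lemma exp_conv_integrable:
  fixes f :: "real \<Rightarrow> 'a::banach"
  assumes "continuous_on {a..b} f"
  shows "(\<lambda>r. (l * exp (- l * (t - r))) *\<^sub>R f r) integrable_on {a..b}"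
  using assms by (intro integrable_continuous_interval continuous_intros)

lemma norm_exp_conv_le:
  fixes f :: "real \<Rightarrow> 'a::banach"
  assumes l: "l \<ge> 0" and ab: "a \<le> b" and f: "continuous_on {a..b} f"
    and B: "\<And>r. r \<in> {a..b} \<Longrightarrow> norm (f r) \<le> B"
  shows "norm (exp_conv l a b f) \<le> B * (1 - exp (- l * (b - a)))"
proof -
  have "norm (exp_conv l a b f) \<le> integral {a..b} (\<lambda>r. l * exp (- l * (b - r)) * B)"
    unfolding exp_conv_def
  proof (rule integral_norm_bound_integral)
    show "(\<lambda>r. l * exp (- l * (b - r)) * B) integrable_on {a..b}"
      by (intro integrable_continuous_interval continuous_intros)
    show "norm ((l * exp (- l * (b - r))) *\<^sub>R f r) \<le> l * exp (- l * (b - r)) * B"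
      if "r \<in> {a..b}" for r
      using mult_left_mono[OF B[OF that], of "l * exp (- l * (b - r))"] l by (simp add: abs_mult)
  qed (rule exp_conv_integrable[OF f])
  also have "\<dots> = (1 - exp (- l * (b - a))) * B"
    using has_integral_mult_left[OF exp_kernel_has_integral[OF ab, of l], of B]
    by (rule integral_unique)
  finally show ?thesis by (simp only: mult.commute)
qed

lemma exp_conv_split:
  fixes f :: "real \<Rightarrow> 'a::banach"
  assumes su: "s \<le> u" and ut: "u \<le> t" and f: "continuous_on {s..t} f"
  shows "exp_conv l s t f = exp (- l * (t - u)) *\<^sub>R exp_conv l s u f + exp_conv l u t f"
proof -
  have "exp_conv l s t f = integral {s..u} (\<lambda>r. (l * exp (- l * (t - r))) *\<^sub>R f r) + exp_conv l u t f"
    unfolding exp_conv_def using su ut exp_conv_integrable[OF f, of l t]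
    by (intro Henstock_Kurzweil_Integration.integral_combine[symmetric]) auto
  also have "(\<lambda>r. (l * exp (- l * (t - r))) *\<^sub>R f r)
      = (\<lambda>r. exp (- l * (t - u)) *\<^sub>R ((l * exp (- l * (u - r))) *\<^sub>R f r))"
    by (simp add: fun_eq_iff exp_add[symmetric] algebra_simps)
  finally show ?thesis by (simp only: integral_cmul exp_conv_def)
qed

lemma norm_exp_conv_diff_le:
  fixes f :: "real \<Rightarrow> 'a::banach"
  assumes l: "l \<ge> 0" and su: "s \<le> u" and ut: "u \<le> t" and f: "continuous_on {s..t} f"
    and B: "\<And>r. r \<in> {s..t} \<Longrightarrow> norm (f r) \<le> B"
  shows "norm (exp_conv l s t f - exp_conv l s u f) \<le> 2 * B * (1 - exp (- l * (t - u)))"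
proof -
  define c where "c = 1 - exp (- l * (t - u))"
  have c: "0 \<le> c" "c \<le> 1" using l ut by (auto simp: c_def mult_nonneg_nonneg)
  have "exp_conv l s t f - exp_conv l s u f = exp_conv l u t f - c *\<^sub>R exp_conv l s u f"
    using exp_conv_split[OF su ut f, of l] by (simp add: c_def algebra_simps)
  then have "norm (exp_conv l s t f - exp_conv l s u f) \<le> norm (exp_conv l u t f) + c * norm (exp_conv l s u f)"
    using c norm_triangle_ineq4[of "exp_conv l u t f" "c *\<^sub>R exp_conv l s u f"] by simp
  also have "norm (exp_conv l u t f) \<le> B * c"
    unfolding c_def using f su B by (intro norm_exp_conv_le[OF l ut]) (auto elim: continuous_on_subset)
  also have "norm (exp_conv l s u f) \<le> B"
  proof -
    have "norm (exp_conv l s u f) \<le> B * (1 - exp (- l * (u - s)))"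
      using f ut B by (intro norm_exp_conv_le[OF l su]) (auto elim: continuous_on_subset)
    also have "\<dots> \<le> B"
      using B[of s] su ut l
      by (intro mult_left_le) (auto simp: mult_nonneg_nonneg intro: order_trans[OF norm_ge_zero])
    finally show ?thesis .
  qed
  finally show ?thesis using c by (simp add: mult_left_mono c_def)
qed

section \<open>The Hoelder estimate\<close>

definition semigr_conv :: "(nat \<Rightarrow> 'v::{real_inner,banach,second_countable_topology}) \<Rightarrow> (nat \<Rightarrow> real)
    \<Rightarrow> (real \<Rightarrow> 'v) \<Rightarrow> real \<Rightarrow> real \<Rightarrow> ('v \<Rightarrow> 'v) \<Rightarrow> 'v" where
  "semigr_conv e lam G s t E = (LINT r:{s..t}|lborel. opA e lam (semigr e lam (t - r) (E (G r))))"

lemma semigr_conv_HSbasis: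
  fixes G :: "real \<Rightarrow> 'v::{real_inner,banach,second_countable_topology}"
  assumes o: "orthonormal_seq e" and G: "continuous_on {s..t} G"
  shows "semigr_conv e lam G s t (HSbasis e lam \<delta> (i, j))
    = (- (lam i powr (- \<delta>)) * (exp_conv (lam i) s t G \<bullet> e j)) *\<^sub>R e i"
proof -
  define \<phi> where "\<phi> r = - (lam i powr (- \<delta>)) * ((lam i * exp (- lam i * (t - r))) *\<^sub>R G r \<bullet> e j)" for r
  have "continuous_on {s..t} \<phi>" unfolding \<phi>_def by (intro continuous_intros G)
  then have \<phi>: "set_integrable lborel {s..t} \<phi>"
    unfolding set_integrable_def by (intro borel_integrable_compact) auto
  have "semigr_conv e lam G s t (HSbasis e lam \<delta> (i, j)) = (\<integral>r. (indicator {s..t} r *\<^sub>R \<phi> r) *\<^sub>R e i \<partial>lborel)"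
    unfolding semigr_conv_def set_lebesgue_integral_def opA_semigr_HSbasis[OF o] \<phi>_def
    by (simp add: algebra_simps)
  also have "\<dots> = (LINT r:{s..t}|lborel. \<phi> r) *\<^sub>R e i"
    using \<phi> unfolding set_integrable_def set_lebesgue_integral_def by (rule integral_scaleR_left)
  also have "(LINT r:{s..t}|lborel. \<phi> r) = integral {s..t} \<phi>"
    by (rule set_borel_integral_eq_integral(2)[OF \<phi>])
  also have "\<dots> = - (lam i powr (- \<delta>)) * (exp_conv (lam i) s t G \<bullet> e j)"
    unfolding \<phi>_def exp_conv_def
    using integral_linear[OF exp_conv_integrable[OF G] bounded_linear_inner_left, of "e j" "lam i" t]
    by (simp add: o_def)
  finally show ?thesis .
qed

lemma semigr_conv_start: "semigr_conv e lam G s s E = 0"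
  unfolding semigr_conv_def set_lebesgue_integral_def
  by (rule integral_eq_zero_AE) (use AE_lborel_singleton[of s] in \<open>auto elim!: eventually_mono\<close>)

lemma HS_sq_semigr_conv_row_le:
  fixes G :: "real \<Rightarrow> 'v::{real_inner,banach,second_countable_topology}"
  assumes o: "orthonormal_seq e" and l: "lam i > 0" and \<gamma>: "0 < \<gamma>" "\<gamma> \<le> 1"
    and G: "continuous_on {s..t} G" and B: "\<And>r. r \<in> {s..t} \<Longrightarrow> norm (G r) \<le> B"
    and su: "s \<le> u" and ut: "u \<le> t"
  shows "(\<integral>\<^sup>+ j. ennreal ((norm (semigr_conv e lam G s t (HSbasis e lam \<delta> (i, j))
                                  - semigr_conv e lam G s u (HSbasis e lam \<delta> (i, j))))\<^sup>2) \<partial>count_space UNIV)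
    \<le> ennreal ((2 * B)\<^sup>2 * (t - u) powr (2 * \<gamma>) * lam i powr (2 * \<gamma> - 2 * \<delta>))"
proof (rule nn_integral_count_space_nat_le)
  fix N
  define \<Phi> where "\<Phi> = exp_conv (lam i) s t G - exp_conv (lam i) s u G"
  have Gu: "continuous_on {s..u} G" using ut by (intro continuous_on_subset[OF G]) auto
  have "semigr_conv e lam G s t (HSbasis e lam \<delta> (i, j)) - semigr_conv e lam G s u (HSbasis e lam \<delta> (i, j))
      = (- (lam i powr (- \<delta>)) * (\<Phi> \<bullet> e j)) *\<^sub>R e i" for j
    unfolding semigr_conv_HSbasis[OF o G] semigr_conv_HSbasis[OF o Gu] \<Phi>_def
    by (simp add: inner_diff_left algebra_simps)
  then have "(\<Sum>j<N. (norm (semigr_conv e lam G s t (HSbasis e lam \<delta> (i, j))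
                            - semigr_conv e lam G s u (HSbasis e lam \<delta> (i, j))))\<^sup>2)
      \<le> (lam i powr (- \<delta>))\<^sup>2 * (norm \<Phi>)\<^sup>2"
    using bessel_inequality_finite[OF o, of "{..<N}" \<Phi>]
    by (simp add: norm_orthonormal_seq[OF o] power_mult_distrib sum_distrib_left[symmetric]
        mult_left_mono)
  also have "\<dots> \<le> (lam i powr (- \<delta>))\<^sup>2 * (2 * B * (1 - exp (- lam i * (t - u))))\<^sup>2"
    unfolding \<Phi>_def using l G B
    by (intro mult_left_mono power_mono norm_exp_conv_diff_le su ut) auto
  also have "\<dots> = (2 * B)\<^sup>2 * ((lam i powr (- \<delta>))\<^sup>2 * (1 - exp (- lam i * (t - u)))\<^sup>2)"
    by (simp only: power_mult_distrib mult_ac)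
  also have "\<dots> \<le> (2 * B)\<^sup>2 * (t - u) powr (2 * \<gamma>) * lam i powr (2 * \<gamma> - 2 * \<delta>)"
    using powr_weighted_one_minus_exp_sq_le[of "lam i" "t - u" \<gamma> \<delta>] l \<gamma> ut
    unfolding mult.assoc by (intro mult_left_mono) auto
  finally show "(\<Sum>j<N. (norm (semigr_conv e lam G s t (HSbasis e lam \<delta> (i, j))
                                - semigr_conv e lam G s u (HSbasis e lam \<delta> (i, j))))\<^sup>2)
      \<le> (2 * B)\<^sup>2 * (t - u) powr (2 * \<gamma>) * lam i powr (2 * \<gamma> - 2 * \<delta>)" .
qed simp

lemma HS_sq_semigr_conv_diff_le:
  fixes G :: "real \<Rightarrow> 'v::{real_inner,banach,second_countable_topology}"
  assumes e: "ONB e" and lam: "\<forall>i. lam i > 0" and \<gamma>: "0 < \<gamma>" "\<gamma> \<le> 1"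
    and sg: "summable (\<lambda>i. lam i powr (2 * \<gamma> - 2 * \<delta>))"
    and G: "continuous_on {s..t} G" and B: "\<And>r. r \<in> {s..t} \<Longrightarrow> norm (G r) \<le> B"
    and su: "s \<le> u" and ut: "u \<le> t"
  shows "HS_sq e lam \<delta> (\<lambda>E. semigr_conv e lam G s t E - semigr_conv e lam G s u E)
     \<le> ennreal ((2 * B * sqrt (\<Sum>i. lam i powr (2 * \<gamma> - 2 * \<delta>)) * \<bar>t - u\<bar> powr \<gamma>)\<^sup>2)"
proof -
  define S where "S = (\<Sum>i. lam i powr (2 * \<gamma> - 2 * \<delta>))"
  define K where "K = (2 * B)\<^sup>2 * (t - u) powr (2 * \<gamma>)"
  have "HS_sq e lam \<delta> (\<lambda>E. semigr_conv e lam G s t E - semigr_conv e lam G s u E)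
      = (\<integral>\<^sup>+ i. \<integral>\<^sup>+ j. ennreal ((norm (semigr_conv e lam G s t (HSbasis e lam \<delta> (i, j))
          - semigr_conv e lam G s u (HSbasis e lam \<delta> (i, j))))\<^sup>2) \<partial>count_space UNIV \<partial>count_space UNIV)"
    unfolding HS_sq_def by (rule nn_integral_fst_count_space[symmetric, simplified])
  also have "\<dots> \<le> (\<integral>\<^sup>+ i. ennreal (K * lam i powr (2 * \<gamma> - 2 * \<delta>)) \<partial>count_space UNIV)"
    unfolding K_def using ONB_imp_orthonormal_seq[OF e] lam \<gamma> G B su ut
    by (intro nn_integral_mono HS_sq_semigr_conv_row_le) auto
  also have "\<dots> \<le> ennreal (K * S)"
    unfolding S_def K_def using sg
    by (intro nn_integral_count_space_nat_le)
       (auto simp: sum_distrib_left[symmetric] intro!: mult_left_mono sum_le_suminf)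
  also have "K * S = (2 * B * sqrt S * \<bar>t - u\<bar> powr \<gamma>)\<^sup>2"
    using ut sg by (simp add: K_def S_def power_mult_distrib power2_powr suminf_nonneg)
  finally show ?thesis unfolding S_def .
qed

lemma semigroup_convolution_Hoelder_pathwise:
  fixes e :: "nat \<Rightarrow> 'v::{real_inner,banach,second_countable_topology}" and w :: "real \<Rightarrow> 'v"
  assumes e: "ONB e" and lam: "\<forall>i. lam i > 0" and \<delta>: "0 < \<delta>" "\<delta> \<le> 1" and \<gamma>: "0 < \<gamma>" "\<gamma> \<le> 1"
    and sg: "summable (\<lambda>i. lam i powr (2 * \<gamma> - 2 * \<delta>))"
    and w: "continuous_on {0..1} w"
  shows "\<exists>C. \<forall>s\<in>{0..<1}.
     (\<forall>t\<in>{s..1}. \<forall>E\<in>HS_V_Vdelta e lam \<delta>.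
        set_integrable lborel {s..t} (\<lambda>r. opA e lam (semigr e lam (t - r) (E (w r - w s))))) \<and>
     (\<forall>t\<in>{s..1}. HS_sq e lam \<delta>
        (\<lambda>E. LINT r:{s..t}|lborel. opA e lam (semigr e lam (t - r) (E (w r - w s)))) < \<infinity>) \<and>
     (\<forall>t\<in>{s..1}. \<forall>u\<in>{s..1}. HS_sq e lam \<delta>
        (\<lambda>E. (LINT r:{s..t}|lborel. opA e lam (semigr e lam (t - r) (E (w r - w s))))
           - (LINT r:{s..u}|lborel. opA e lam (semigr e lam (u - r) (E (w r - w s)))))
        \<le> ennreal ((C * \<bar>t - u\<bar> powr \<gamma>)\<^sup>2))"
proof -
  obtain B where B: "\<And>r r'. r \<in> {0..1} \<Longrightarrow> r' \<in> {0..1} \<Longrightarrow> norm (w r - w r') \<le> B"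
  proof -
    have "bounded (w ` {0..1})" by (intro compact_imp_bounded compact_continuous_image w) simp
    then obtain b where "\<And>r. r \<in> {0..1} \<Longrightarrow> norm (w r) \<le> b" unfolding bounded_iff by blast
    then show thesis by (intro that[of "2 * b"]) (smt (verit) norm_triangle_ineq4)
  qed
  define C where "C = 2 * B * sqrt (\<Sum>i. lam i powr (2 * \<gamma> - 2 * \<delta>))"
  show ?thesis
  proof (intro exI[of _ C] ballI conjI)
    fix s :: real assume s: "s \<in> {0..<1}"
    define G where "G r = w r - w s" for r
    have G: "continuous_on {s..t} G" if "t \<le> 1" for t
      unfolding G_def using s that by (intro continuous_intros continuous_on_subset[OF w]) auto
    have GB: "norm (G r) \<le> B" if "r \<in> {s..1}" for r
      unfolding G_def using B s that by auto
    have holder: "HS_sq e lam \<delta> (\<lambda>E. semigr_conv e lam G s t E - semigr_conv e lam G s u E)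
        \<le> ennreal ((C * \<bar>t - u\<bar> powr \<gamma>)\<^sup>2)"
      if "t \<in> {s..1}" "u \<in> {s..1}" for t u
    proof (cases "u \<le> t")
      case True
      then show ?thesis unfolding C_def using that GB
        by (intro HS_sq_semigr_conv_diff_le[OF e lam \<gamma> sg G]) auto
    next
      case False
      then have "HS_sq e lam \<delta> (\<lambda>E. semigr_conv e lam G s u E - semigr_conv e lam G s t E)
          \<le> ennreal ((C * \<bar>u - t\<bar> powr \<gamma>)\<^sup>2)"
        unfolding C_def using that GB by (intro HS_sq_semigr_conv_diff_le[OF e lam \<gamma> sg G]) auto
      then show ?thesis by (subst HS_sq_diff_commute) (simp add: abs_minus_commute)
    qed
    show "set_integrable lborel {s..t} (\<lambda>r. opA e lam (semigr e lam (t - r) (E (w r - w s))))"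
      if "t \<in> {s..1}" "E \<in> HS_V_Vdelta e lam \<delta>" for t E
      using set_integrable_opA_semigr[OF e lam \<delta> that(2) G, where B = B] that GB
      by (auto simp: G_def)
    show "HS_sq e lam \<delta> (\<lambda>E. LINT r:{s..t}|lborel. opA e lam (semigr e lam (t - r) (E (w r - w s)))) < \<infinity>"
      if "t \<in> {s..1}" for t
    proof -
      have "HS_sq e lam \<delta> (semigr_conv e lam G s t) \<le> ennreal ((C * \<bar>t - s\<bar> powr \<gamma>)\<^sup>2)"
        using holder[of t s] that s by (simp add: semigr_conv_start)
      also have "\<dots> < \<infinity>" by simp
      finally show ?thesis unfolding semigr_conv_def G_def .
    qed
    show "HS_sq e lam \<delta> (\<lambda>E. (LINT r:{s..t}|lborel. opA e lam (semigr e lam (t - r) (E (w r - w s))))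
           - (LINT r:{s..u}|lborel. opA e lam (semigr e lam (u - r) (E (w r - w s)))))
        \<le> ennreal ((C * \<bar>t - u\<bar> powr \<gamma>)\<^sup>2)" if "t \<in> {s..1}" "u \<in> {s..1}" for t u
      using holder[OF that] unfolding semigr_conv_def G_def .
  qed
qed

theorem lemma5p2:
  fixes e :: "nat \<Rightarrow> 'v::{real_inner,banach,second_countable_topology}"
    and lam q :: "nat \<Rightarrow> real" and \<delta> \<gamma> :: real
    and M :: "'a measure" and W :: "'a \<Rightarrow> real \<Rightarrow> 'v"
  assumes onb: "ONB e"
    and lam_pos: "\<forall>i. lam i > 0"
    and lam_inf: "filterlim lam at_top sequentially"
    and delta: "\<delta> \<in> {0..1}"
    and sum_delta: "summable (\<lambda>i. lam i powr (- 2 * \<delta>))"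
    and q_pos: "\<forall>i. q i > 0"
    and q_trace: "summable q"
    and M: "prob_space M"
    and W: "Q_Wiener M e q W"
    and W_holder: "\<forall>x\<in>space M. \<forall>\<gamma>'<1/2. holder_on \<gamma>' {0..1} (W x)"
    and gamma: "\<gamma> > 1/2"
    and sum_gamma: "summable (\<lambda>i. lam i powr (2 * \<gamma> - 2 * \<delta>))"
  shows "AE x in M. \<exists>C. \<forall>s\<in>{0..<1}.
     (\<forall>t\<in>{s..1}. \<forall>E\<in>HS_V_Vdelta e lam \<delta>.
        set_integrable lborel {s..t} (\<lambda>r. opA e lam (semigr e lam (t - r) (E (W x r - W x s))))) \<and>
     (\<forall>t\<in>{s..1}. HS_sq e lam \<delta>
        (\<lambda>E. LINT r:{s..t}|lborel. opA e lam (semigr e lam (t - r) (E (W x r - W x s)))) < \<infinity>) \<and>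
     (\<forall>t\<in>{s..1}. \<forall>u\<in>{s..1}. HS_sq e lam \<delta>
        (\<lambda>E. (LINT r:{s..t}|lborel. opA e lam (semigr e lam (t - r) (E (W x r - W x s))))
           - (LINT r:{s..u}|lborel. opA e lam (semigr e lam (u - r) (E (W x r - W x s)))))
        \<le> ennreal ((C * \<bar>t - u\<bar> powr \<gamma>)\<^sup>2))"
proof -
  have "2 * \<gamma> - 2 * \<delta> < 0" using lam_inf sum_gamma by (rule summable_powr_imp_exponent_neg)
  then have "0 < \<gamma>" "\<gamma> \<le> 1" "0 < \<delta>" "\<delta> \<le> 1" using gamma delta by auto
  moreover have "continuous_on {0..1} (W x)" if "x \<in> space M" for x
    using W_holder that by (intro holder_on_imp_continuous_on[of "1/4"]) auto
  ultimately show ?thesis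
    by (intro AE_I2 semigroup_convolution_Hoelder_pathwise[OF onb lam_pos _ _ _ _ sum_gamma]) auto
qed

end
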